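(* Let $F$ be a field whose characteristic is not $2$, let $\alpha\in F\setminus\{0\}$, and let $k\geq 4$ be an integer. Then every $x\in F$ can be written as $x=a_1a_2\cdots a_k$ with $a_1,\ldots,a_k\in F$ satisfying $a_1+a_2+\cdots+a_k=\alpha$. *)

theory Defs
  imports Main
begin

end

theory Submission
  imports Defs
begin

text \<open>
  For \<open>c \<noteq> 0\<close> and \<open>m \<noteq> 0\<close> the four numbers \<open>\<alpha> + c/m, m, -m, -c/m\<close> sum to \<open>\<alpha>\<close> and
  multiply to \<open>c (\<alpha> m + c)\<close>; choosing \<open>m = (x/c - c)/\<alpha>\<close> makes the product \<open>x\<close>, which is
  possible as soon as \<open>c\<^sup>2 \<noteq> x\<close>. One of \<open>c = 1, \<alpha>, 2\<close> qualifies, except in characteristic 3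
  with \<open>x = 1 = \<alpha>\<^sup>2\<close>, where \<open>\<alpha>, \<alpha>, \<alpha>, \<alpha>\<close> works directly. For more than four factors, append a
  factor \<open>e \<in> {1, -1}\<close> with \<open>e \<noteq> \<alpha>\<close> and decompose \<open>x/e\<close> with sum \<open>\<alpha> - e \<noteq> 0\<close>.
\<close>

lemma four_factors_if_square_ne:
  fixes \<alpha> x c :: "'a :: field"
  assumes "\<alpha> \<noteq> 0" "c \<noteq> 0" "c * c \<noteq> x"
  shows "\<exists>a b d e. a + b + d + e = \<alpha> \<and> a * b * d * e = x"
proof -
  define m where "m = (x / c - c) / \<alpha>"
  have "m \<noteq> 0" using assms by (auto simp: m_def field_simps)
  then have "(\<alpha> + c/m) * m * (-m) * (-c/m) = c * (\<alpha> * m + c)"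
    by (simp add: field_simps)
  also have "\<dots> = x" using assms by (simp add: m_def field_simps)
  finally have "(\<alpha> + c/m) * m * (-m) * (-c/m) = x" .
  moreover have "(\<alpha> + c/m) + m + (-m) + (-c/m) = \<alpha>" by simp
  ultimately show ?thesis by blast
qed

lemma four_factors:
  fixes \<alpha> x :: "'a :: field"
  assumes "(2::'a) \<noteq> 0" "\<alpha> \<noteq> 0"
  shows "\<exists>a b d e. a + b + d + e = \<alpha> \<and> a * b * d * e = x"
proof -
  consider "x \<noteq> 1" | "\<alpha> * \<alpha> \<noteq> x" | "(3::'a) \<noteq> 0" "x = 1"
    | "(3::'a) = 0" "x = 1" "\<alpha> * \<alpha> = 1"
    by blast
  then show ?thesis
  proof cases
    case 1
    then show ?thesis using four_factors_if_square_ne[of \<alpha> 1 x] assms by simp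
  next
    case 2
    then show ?thesis using four_factors_if_square_ne[of \<alpha> \<alpha> x] assms by simp
  next
    case 3
    have "(2::'a) * 2 \<noteq> 1"
    proof
      assume "(2::'a) * 2 = 1"
      then have "(3::'a) + 1 = 0 + 1" by simp
      with \<open>(3::'a) \<noteq> 0\<close> show False by (metis add_right_imp_eq)
    qed
    then show ?thesis using four_factors_if_square_ne[of \<alpha> 2 x] assms 3 by simp
  next
    case 4
    have "\<alpha> + \<alpha> + \<alpha> + \<alpha> = \<alpha> + 3 * \<alpha>" by (simp add: algebra_simps)
    with 4 have "\<alpha> + \<alpha> + \<alpha> + \<alpha> = \<alpha>" by simp
    moreover have "\<alpha> * \<alpha> * \<alpha> * \<alpha> = x"
      using 4 by (metis mult.assoc mult_1_right)
    ultimately show ?thesis by blast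
  qed
qed

lemma prod_sum_lessThan_Suc_fun_upd:
  fixes a :: "nat \<Rightarrow> 'a :: field"
  assumes "e \<noteq> 0" "(\<Prod>i<k. a i) = x / e" "(\<Sum>i<k. a i) = \<alpha> - e"
  shows "(\<Prod>i<Suc k. (a(k := e)) i) = x \<and> (\<Sum>i<Suc k. (a(k := e)) i) = \<alpha>"
proof -
  have "(\<Prod>i<k. (a(k := e)) i) = (\<Prod>i<k. a i)" "(\<Sum>i<k. (a(k := e)) i) = (\<Sum>i<k. a i)"
    by (auto intro: prod.cong sum.cong)
  with assms show ?thesis by simp
qed

theorem theorem1p1:
  fixes \<alpha> x :: "'a :: field" and k :: nat
  assumes "(2::'a) \<noteq> 0"
    and "\<alpha> \<noteq> 0"
    and "k \<ge> 4"
  shows "\<exists>a :: nat \<Rightarrow> 'a. (\<Prod>i<k. a i) = x \<and> (\<Sum>i<k. a i) = \<alpha>"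
  using assms(3,2)
proof (induction k arbitrary: \<alpha> x rule: dec_induct)
  case base
  obtain a b d e where "a + b + d + e = \<alpha>" "a * b * d * e = x"
    using four_factors[OF assms(1) base] by blast
  then have "(\<Prod>i<4. [a, b, d, e] ! i) = x \<and> (\<Sum>i<4. [a, b, d, e] ! i) = \<alpha>"
    by (simp add: numeral_eq_Suc lessThan_Suc algebra_simps)
  then show ?case by blast
next
  case (step k)
  obtain e :: 'a where "e \<in> {1, -1}" "e \<noteq> \<alpha>"
    using assms(1) by (metis insertCI one_add_one neg_eq_iff_add_eq_0)
  then have "e \<noteq> 0" "\<alpha> - e \<noteq> 0" by auto
  then obtain a where "(\<Prod>i<k. a i) = x / e" "(\<Sum>i<k. a i) = \<alpha> - e"
    using step.IH by blast
  with \<open>e \<noteq> 0\<close> show ?case by (blast dest: prod_sum_lessThan_Suc_fun_upd)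
qed

end
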